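(* Let $S$ and $T$ be finite sets and $E\subseteq S\times T$. For each $(s,t)\in E$ let $X_{st}$ be a random variable with distribution $\mathrm{Beta}(1+\alpha_{st},1+\beta_{st})$ (with $\alpha_{st},\beta_{st}\ge 0$), the $X_{st}$ being independent. For $y\in\mathbb{R}^S_{+}$ and $x\in[0,1]^E$ define \[ \mathcal I(y;x)=\sum_{t\in T}\Big(1-\prod_{(s,t)\in E} x_{st}^{\,y(s)}\Big). \] Let $\mathcal Y\subseteq\mathbb{R}^S_+$ be convex. Then both problems $\max_{y\in\mathcal Y}\mathcal I(y;\mathbb{E}[X])$ and $\max_{y\in\mathcal Y}\mathbb{E}[\mathcal I(y;X)]$ are concave maximization problems over the convex set $\mathcal Y$, i.e. the functions $y\mapsto \mathcal I(y;\mathbb{E}[X])$ and $y\mapsto\mathbb{E}[\mathcal I(y;X)]$ are concave on $\mathcal Y$.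
   Context: $x_{st}$ is interpreted as the failure probability of the edge $(s,t)$ in a bipartite influence graph, and $y(s)$ as the budget assigned to channel $s$; $\mathcal I(y;x)$ is the expected number of influenced nodes of $T$. *)

theory Defs
  imports "HOL-Probability.Probability"
begin

definition rpow :: "real \<Rightarrow> real \<Rightarrow> real" where
  "rpow x y = (if y = 0 then 1 else x powr y)"

definition beta_density :: "real \<Rightarrow> real \<Rightarrow> real \<Rightarrow> ennreal" where
  "beta_density a b x =
     ennreal (indicator {0<..<1} x * x powr a * (1 - x) powr b / Beta (1 + a) (1 + b))"

definition influence :: "('s \<times> 't) set \<Rightarrow> real ^ 's \<Rightarrow> ('s \<times> 't \<Rightarrow> real) \<Rightarrow> real" where
  "influence E y x = (\<Sum>t\<in>(UNIV::'t set). 1 - (\<Prod>s\<in>{s. (s, t) \<in> E}. rpow (x (s, t)) (y $ s)))"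

end

theory Submission
  imports Defs
begin

text \<open>For fixed failure probabilities x, each product \<Prod>s x_st^y(s) is convex in y on the
  nonnegative orthant, so the influence is concave in y pointwise in x. Concavity therefore survives
  both substituting E[X] and averaging over X; the average is finite because Beta variables lie in
  (0,1) almost surely, which bounds the influence by |T|.\<close>

lemma rpow_eq_exp_ln: "rpow x w = (if x = 0 \<and> w \<noteq> 0 then 0 else exp (w * ln x))"
  by (simp add: rpow_def powr_def)

lemma rpow_nonneg_le_one:
  assumes "0 \<le> x" "x \<le> 1" "0 \<le> w"
  shows "0 \<le> rpow x w \<and> rpow x w \<le> 1"
  using assms by (auto simp: rpow_def intro: powr_le1)

lemma prod_rpow_eq_exp_sum:
  assumes "finite A"
  shows "(\<Prod>s\<in>A. rpow (x s) (w s)) =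
    (if \<exists>s\<in>A. x s = 0 \<and> w s \<noteq> 0 then 0 else exp (\<Sum>s\<in>A. w s * ln (x s)))"
proof (cases "\<exists>s\<in>A. x s = 0 \<and> w s \<noteq> 0")
  case True
  then show ?thesis using assms by (auto simp: rpow_eq_exp_ln intro!: prod_zero)
next
  case False
  then have "(\<Prod>s\<in>A. rpow (x s) (w s)) = (\<Prod>s\<in>A. exp (w s * ln (x s)))"
    by (intro prod.cong) (auto simp: rpow_eq_exp_ln)
  with False assms show ?thesis by (simp add: exp_sum)
qed

lemma convex_nonneg_orthant: "convex {y :: real ^ 'n. \<forall>i. 0 \<le> y $ i}"
  unfolding convex_def by auto

text \<open>Away from zero bases the product is the exponential of a linear function of the exponents;
  a zero base contributes the indicator of a vanishing exponent, which is convex on the nonnegative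
  half-line.\<close>
lemma convex_on_prod_rpow:
  fixes x :: "'n::finite \<Rightarrow> real" and A :: "'n set"
  shows "convex_on {y. \<forall>i. 0 \<le> y $ i} (\<lambda>y. \<Prod>s\<in>A. rpow (x s) (y $ s))"
proof (rule convex_onI[OF _ convex_nonneg_orthant])
  fix t :: real and y z :: "real ^ 'n"
  assume t: "0 < t" "t < 1" and y: "y \<in> {y. \<forall>i. 0 \<le> y $ i}" and z: "z \<in> {y. \<forall>i. 0 \<le> y $ i}"
  define u where "u = (1 - t) *\<^sub>R y + t *\<^sub>R z"
  let ?L = "\<lambda>w :: real ^ 'n. \<Sum>s\<in>A. w $ s * ln (x s)"
  have rhs_nonneg: "0 \<le> (1 - t) * (\<Prod>s\<in>A. rpow (x s) (y $ s)) + t * (\<Prod>s\<in>A. rpow (x s) (z $ s))"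
    using t by (simp add: prod_rpow_eq_exp_sum)
  show "(\<Prod>s\<in>A. rpow (x s) (((1 - t) *\<^sub>R y + t *\<^sub>R z) $ s))
      \<le> (1 - t) * (\<Prod>s\<in>A. rpow (x s) (y $ s)) + t * (\<Prod>s\<in>A. rpow (x s) (z $ s))"
  proof (cases "\<exists>s\<in>A. x s = 0 \<and> u $ s \<noteq> 0")
    case True
    with rhs_nonneg show ?thesis by (simp add: prod_rpow_eq_exp_sum u_def)
  next
    case False
    have yz_zero: "y $ s = 0 \<and> z $ s = 0" if "s \<in> A" "x s = 0" for s
    proof -
      have "(1 - t) * y $ s + t * z $ s = 0" using False that by (simp add: u_def)
      moreover have "0 \<le> (1 - t) * y $ s" "0 \<le> t * z $ s" using t y z by auto
      ultimately show ?thesis using t by (simp add: add_nonneg_eq_0_iff)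
    qed
    have "?L u = (1 - t) * ?L y + t * ?L z"
      unfolding sum_distrib_left sum.distrib[symmetric]
      by (rule sum.cong) (auto simp: u_def algebra_simps)
    then have "exp (?L u) \<le> (1 - t) * exp (?L y) + t * exp (?L z)"
      using convex_onD[OF exp_convex, of t "?L y" "?L z"] t by simp
    moreover have y_ok: "\<not> (\<exists>s\<in>A. x s = 0 \<and> y $ s \<noteq> 0)"
      and z_ok: "\<not> (\<exists>s\<in>A. x s = 0 \<and> z $ s \<noteq> 0)"
      using yz_zero by auto
    ultimately show ?thesis
      unfolding prod_rpow_eq_exp_sum[OF finite] u_def[symmetric]
        if_not_P[OF False] if_not_P[OF y_ok] if_not_P[OF z_ok]
      by simp
  qed
qed

lemma concave_on_sum_fun:
  assumes "finite I" "convex S" "\<And>i. i \<in> I \<Longrightarrow> concave_on S (f i)"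
  shows "concave_on S (\<lambda>x. \<Sum>i\<in>I. f i x)"
  using assms by (induction I rule: finite_induct) (auto simp: concave_on_const intro: concave_on_add)

lemma concave_on_influence:
  "concave_on {y. \<forall>s. 0 \<le> y $ s} (\<lambda>y. influence E y (x :: 's::finite \<times> 't::finite \<Rightarrow> real))"
  unfolding influence_def
  by (intro concave_on_sum_fun concave_on_diff convex_on_prod_rpow convex_nonneg_orthant)
     (simp_all add: concave_on_const convex_nonneg_orthant)

lemma influence_nonneg_le_card:
  fixes E :: "('s::finite \<times> 't::finite) set"
  assumes "\<forall>s. 0 \<le> y $ s" "\<forall>e\<in>E. x e \<in> {0..1}"
  shows "0 \<le> influence E y x \<and> influence E y x \<le> CARD('t)"
proof -
  have prod_bounds: "0 \<le> (\<Prod>s\<in>{s. (s, t) \<in> E}. rpow (x (s, t)) (y $ s))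
      \<and> (\<Prod>s\<in>{s. (s, t) \<in> E}. rpow (x (s, t)) (y $ s)) \<le> 1" for t
    using assms rpow_nonneg_le_one by (auto intro!: prod_nonneg prod_le_1)
  have "0 \<le> influence E y x"
    unfolding influence_def using prod_bounds by (intro sum_nonneg) auto
  moreover have "influence E y x \<le> (\<Sum>t\<in>(UNIV :: 't set). 1)"
    unfolding influence_def using prod_bounds by (intro sum_mono) auto
  ultimately show ?thesis by simp
qed

lemma concave_on_integral:
  assumes "convex C"
    and "\<And>\<omega>. \<omega> \<in> space M \<Longrightarrow> concave_on C (\<lambda>y. f y \<omega>)"
    and "\<And>y. y \<in> C \<Longrightarrow> integrable M (f y)"
  shows "concave_on C (\<lambda>y. \<integral>\<omega>. f y \<omega> \<partial>M)"
  unfolding concave_on_iff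
proof (intro conjI assms(1) ballI allI impI)
  fix y z and u v :: real
  assume yz: "y \<in> C" "z \<in> C" and uv: "0 \<le> u" "0 \<le> v" "u + v = 1"
  have "u * (\<integral>\<omega>. f y \<omega> \<partial>M) + v * (\<integral>\<omega>. f z \<omega> \<partial>M) = (\<integral>\<omega>. u * f y \<omega> + v * f z \<omega> \<partial>M)"
    using assms(3) yz by simp
  also have "\<dots> \<le> (\<integral>\<omega>. f (u *\<^sub>R y + v *\<^sub>R z) \<omega> \<partial>M)"
  proof (rule integral_mono)
    show "integrable M (f (u *\<^sub>R y + v *\<^sub>R z))"
      using assms(1,3) yz uv by (simp add: convex_def)
    show "u * f y \<omega> + v * f z \<omega> \<le> f (u *\<^sub>R y + v *\<^sub>R z) \<omega>" if "\<omega> \<in> space M" for \<omega>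
      using assms(2)[OF that] yz uv by (simp add: concave_on_iff)
  qed (use assms(3) yz in simp)
  finally show "u * (\<integral>\<omega>. f y \<omega> \<partial>M) + v * (\<integral>\<omega>. f z \<omega> \<partial>M) \<le> (\<integral>\<omega>. f (u *\<^sub>R y + v *\<^sub>R z) \<omega> \<partial>M)" .
qed

lemma AE_distributed_iff_AE_density_pos:
  assumes "distributed M N X f" "{x \<in> space N. P x} \<in> sets N"
  shows "(AE \<omega> in M. P (X \<omega>)) \<longleftrightarrow> (AE x in N. 0 < f x \<longrightarrow> P x)"
proof -
  have "(AE \<omega> in M. P (X \<omega>)) \<longleftrightarrow> (AE x in distr M N X. P x)"
    using AE_distr_iff[OF distributed_measurable[OF assms(1)] assms(2)] by simp
  also have "\<dots> \<longleftrightarrow> (AE x in density N f. P x)"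
    unfolding distributed_distr_eq_density[OF assms(1)] ..
  also have "\<dots> \<longleftrightarrow> (AE x in N. 0 < f x \<longrightarrow> P x)"
    by (rule AE_density[OF distributed_borel_measurable[OF assms(1)]])
  finally show ?thesis .
qed

lemma AE_beta_distributed_in_unit_interval:
  assumes "distributed M lborel X (beta_density a b)"
  shows "AE \<omega> in M. X \<omega> \<in> {0<..<1}"
  by (subst AE_distributed_iff_AE_density_pos[OF assms]) (auto simp: beta_density_def indicator_def)

lemma (in finite_measure) integrable_influence:
  fixes E :: "('s::finite \<times> 't::finite) set" and X :: "'s \<times> 't \<Rightarrow> 'a \<Rightarrow> real"
  assumes "\<And>e. e \<in> E \<Longrightarrow> X e \<in> borel_measurable M"
    and "AE \<omega> in M. \<forall>e\<in>E. X e \<omega> \<in> {0..1}"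
    and "\<forall>s. 0 \<le> y $ s"
  shows "integrable M (\<lambda>\<omega>. influence E y (\<lambda>e. X e \<omega>))"
proof (rule integrable_const_bound[where B = "real CARD('t)"])
  show "AE \<omega> in M. norm (influence E y (\<lambda>e. X e \<omega>)) \<le> real CARD('t)"
    using assms(2) by eventually_elim (use influence_nonneg_le_card[OF assms(3)] in fastforce)
  show "(\<lambda>\<omega>. influence E y (\<lambda>e. X e \<omega>)) \<in> borel_measurable M"
    unfolding influence_def rpow_def
  proof (intro borel_measurable_sum borel_measurable_diff borel_measurable_prod)
    fix t s assume "s \<in> {s. (s, t) \<in> E}"
    then have [measurable]: "X (s, t) \<in> borel_measurable M" using assms(1) by auto
    show "(\<lambda>\<omega>. if y $ s = 0 then 1 else X (s, t) \<omega> powr y $ s) \<in> borel_measurable M"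
      by measurable
  qed simp
qed

theorem proposition2:
  fixes E :: "('s::finite \<times> 't::finite) set"
    and \<alpha> \<beta> :: "'s \<times> 't \<Rightarrow> real"
    and M :: "'w measure"
    and X :: "'s \<times> 't \<Rightarrow> 'w \<Rightarrow> real"
    and Y :: "(real ^ 's) set"
  assumes "prob_space M"
    and "\<And>e. e \<in> E \<Longrightarrow> \<alpha> e \<ge> 0 \<and> \<beta> e \<ge> 0"
    and "\<And>e. e \<in> E \<Longrightarrow> distributed M lborel (X e) (beta_density (\<alpha> e) (\<beta> e))"
    and "prob_space.indep_vars M (\<lambda>_. borel) X E"
    and "Y \<subseteq> {y. \<forall>s. 0 \<le> y $ s}"
    and "convex Y"
  shows "concave_on Y (\<lambda>y. influence E y (\<lambda>e. prob_space.expectation M (X e)))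
       \<and> concave_on Y (\<lambda>y. prob_space.expectation M (\<lambda>\<omega>. influence E y (\<lambda>e. X e \<omega>)))"
proof -
  \<comment> \<open>Neither independence nor the Beta parameters matter: concavity holds for every sample.\<close>
  interpret prob_space M by fact
  have "AE \<omega> in M. \<forall>e\<in>E. X e \<omega> \<in> {0..1}"
    by (intro AE_finite_allI finite)
       (auto elim: AE_mp[OF AE_beta_distributed_in_unit_interval[OF assms(3)]])
  then have "integrable M (\<lambda>\<omega>. influence E y (\<lambda>e. X e \<omega>))" if "\<forall>s. 0 \<le> y $ s" for y
    using distributed_measurable[OF assms(3)] that by (intro integrable_influence) auto
  then have "concave_on {y. \<forall>s. 0 \<le> y $ s} (\<lambda>y. expectation (\<lambda>\<omega>. influence E y (\<lambda>e. X e \<omega>)))"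
    by (intro concave_on_integral convex_nonneg_orthant concave_on_influence) auto
  with concave_on_influence assms(5,6) show ?thesis
    unfolding concave_on_def by (blast intro: convex_on_subset)
qed

end
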